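(* Let $V$ be a set of truth values containing distinct elements $1$ and $0$, equipped with a partial order $\leq$ (reflexive, transitive, antisymmetric) such that $0\leq x\leq 1$ for all $x\in V$. Define the order-theoretic truth-relation $\models_{\leq}\subseteq\mathcal{P}(V)\times\mathcal{P}(V)$ by: $\gamma\models_{\leq}\delta$ iff ($\exists x\in\gamma,\exists y\in\delta: x\leq y$) or $0\in\gamma$ or $1\in\delta$. Then $\models_{\leq}$ equals the intersection of all pure consequence relations $\models_{\mathcal{D},\mathcal{D}}$, where $\mathcal{D}$ ranges over the sets of designated values that are upsets for $\leq$.
   Context: A set of designated values is a subset $\mathcal{D}\subseteq V$ with $1\in\mathcal{D}$ and $0\notin\mathcal{D}$. For sets of designated values $\mathcal{D}_p,\mathcal{D}_c$, the mixed consequence truth-relation $\models_{\mathcal{D}_p,\mathcal{D}_c}$ on $\mathcal{P}(V)\times\mathcal{P}(V)$ is defined by $\gamma\models_{\mathcal{D}_p,\mathcal{D}_c}\delta$ iff ($\gamma\subseteq\mathcal{D}_p$ implies $\delta\cap\mathcal{D}_c\neq\emptyset$); it is pure when $\mathcal{D}_p=\mathcal{D}_c$. A set $U\subseteq V$ is an upset for $\leq$ if $x\in U$ and $x\leq y$ imply $y\in U$. *)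

theory Defs
  imports Main
begin

definition designated :: "'v \<Rightarrow> 'v \<Rightarrow> 'v set \<Rightarrow> bool" where
  "designated one zero D \<longleftrightarrow> one \<in> D \<and> zero \<notin> D"

definition upset :: "('v \<Rightarrow> 'v \<Rightarrow> bool) \<Rightarrow> 'v set \<Rightarrow> bool" where
  "upset le U \<longleftrightarrow> (\<forall>x y. x \<in> U \<longrightarrow> le x y \<longrightarrow> y \<in> U)"

definition mixed_cons :: "'v set \<Rightarrow> 'v set \<Rightarrow> 'v set \<Rightarrow> 'v set \<Rightarrow> bool" where
  "mixed_cons Dp Dc \<gamma> \<delta> \<longleftrightarrow> (\<gamma> \<subseteq> Dp \<longrightarrow> \<delta> \<inter> Dc \<noteq> {})"

definition order_cons :: "('v \<Rightarrow> 'v \<Rightarrow> bool) \<Rightarrow> 'v \<Rightarrow> 'v \<Rightarrow> 'v set \<Rightarrow> 'v set \<Rightarrow> bool" where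
  "order_cons le zero one \<gamma> \<delta> \<longleftrightarrow>
     (\<exists>x\<in>\<gamma>. \<exists>y\<in>\<delta>. le x y) \<or> zero \<in> \<gamma> \<or> one \<in> \<delta>"

end

theory Submission
  imports Defs
begin

text \<open>A designated upset D is closed under the order, so a witness x \<le> y with x \<in> \<gamma>
  and y \<in> \<delta> carries designation from \<gamma> to \<delta>; hence order-theoretic validity implies
  validity for every such D. Conversely, if the order-theoretic relation fails for \<gamma> and \<delta>,
  the upset generated by \<gamma> together with 1 is a set of designated values containing \<gamma>
  and disjoint from \<delta>.\<close>

definition upclosure :: "('v \<Rightarrow> 'v \<Rightarrow> bool) \<Rightarrow> 'v set \<Rightarrow> 'v set" where
  "upclosure le A = {y. \<exists>x\<in>A. le x y}"

lemma upset_upclosure: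
  assumes "\<And>x y z. le x y \<Longrightarrow> le y z \<Longrightarrow> le x z"
  shows "upset le (upclosure le A)"
  using assms unfolding upset_def upclosure_def by blast

lemma subset_upclosure:
  assumes "\<And>x. le x x"
  shows "A \<subseteq> upclosure le A"
  using assms unfolding upclosure_def by blast

lemma order_cons_imp_mixed_cons:
  assumes "designated one zero D" and "upset le D" and "order_cons le zero one \<gamma> \<delta>"
  shows "mixed_cons D D \<gamma> \<delta>"
  using assms unfolding designated_def upset_def order_cons_def mixed_cons_def by blast

lemma not_order_cons_imp_countermodel:
  fixes le :: "'v \<Rightarrow> 'v \<Rightarrow> bool" and zero one :: 'v
  assumes "one \<noteq> zero"
    and refl: "\<And>x. le x x"
    and trans: "\<And>x y z. le x y \<Longrightarrow> le y z \<Longrightarrow> le x z"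
    and antisym: "\<And>x y. le x y \<Longrightarrow> le y x \<Longrightarrow> x = y"
    and bounds: "\<And>x. le zero x \<and> le x one"
    and "\<not> order_cons le zero one \<gamma> \<delta>"
  obtains D where "designated one zero D" and "upset le D" and "\<not> mixed_cons D D \<gamma> \<delta>"
proof
  let ?D = "upclosure le (insert one \<gamma>)"
  have below_zero: "x = zero" if "le x zero" for x
    using antisym bounds that by blast
  have above_one: "y = one" if "le one y" for y
    using antisym bounds that by blast
  show "designated one zero ?D"
    using assms below_zero above_one
    unfolding designated_def upclosure_def order_cons_def by blast
  show "upset le ?D"
    using trans by (rule upset_upclosure)
  have "\<gamma> \<subseteq> ?D"
    using subset_upclosure[of le, OF refl] by blast
  moreover have "\<delta> \<inter> ?D = {}"
    using assms above_one unfolding upclosure_def order_cons_def by blast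
  ultimately show "\<not> mixed_cons ?D ?D \<gamma> \<delta>"
    unfolding mixed_cons_def by blast
qed

theorem theorem2p14:
  fixes le :: "'v \<Rightarrow> 'v \<Rightarrow> bool" and zero one :: 'v
  assumes "one \<noteq> zero"
    and refl: "\<And>x. le x x"
    and trans: "\<And>x y z. le x y \<Longrightarrow> le y z \<Longrightarrow> le x z"
    and antisym: "\<And>x y. le x y \<Longrightarrow> le y x \<Longrightarrow> x = y"
    and bounds: "\<And>x. le zero x \<and> le x one"
  shows "{(\<gamma>, \<delta>). order_cons le zero one \<gamma> \<delta>} =
         \<Inter> {{(\<gamma>, \<delta>). mixed_cons D D \<gamma> \<delta>} | D. designated one zero D \<and> upset le D}"
proof -
  have "order_cons le zero one \<gamma> \<delta> \<longleftrightarrow>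
        (\<forall>D. designated one zero D \<and> upset le D \<longrightarrow> mixed_cons D D \<gamma> \<delta>)" for \<gamma> \<delta>
  proof
    show "\<forall>D. designated one zero D \<and> upset le D \<longrightarrow> mixed_cons D D \<gamma> \<delta>"
      if "order_cons le zero one \<gamma> \<delta>"
      using order_cons_imp_mixed_cons that by metis
    show "order_cons le zero one \<gamma> \<delta>"
      if "\<forall>D. designated one zero D \<and> upset le D \<longrightarrow> mixed_cons D D \<gamma> \<delta>"
    proof (rule ccontr)
      assume "\<not> order_cons le zero one \<gamma> \<delta>"
      with assms obtain D
        where "designated one zero D" and "upset le D" and "\<not> mixed_cons D D \<gamma> \<delta>"
        by (rule not_order_cons_imp_countermodel)
      with that show False
        by blast
    qed
  qed
  then show ?thesis
    by blast
qed

end
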